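(* Let $n \ge 1$ and let $p_0, p_1, \ldots, p_n \in \mathbb{Z}^2$ be integer points with $p_n = p_0$, forming the closed polygon $P = (p_0, p_1, \ldots, p_n)$ (not necessarily simple). Then $$\mathrm{Area}(P) = \mathrm{Welp}(P), \qquad\text{where } \mathrm{Welp}(P) := \sum_{q \in \mathbb{Z}^2} \mathrm{Dang}(P - q).$$
   Context: Work over an ordered field $\mathbb{K}$ containing $\mathbb{Q}$ (e.g. $\mathbb{Q}$ or $\mathbb{R}$), viewing $\mathbb{Z}^2 \subset \mathbb{K}^2$. For $u = (u_1,u_2), v = (v_1,v_2) \in \mathbb{K}^2$ define $\mathrm{area}(u,v) := \tfrac12 (u_1 - v_1)(u_2 + v_2)$, and for a polygon $P = (p_0, \ldots, p_n)$ define $\mathrm{Area}(P) := \sum_{i=1}^n \mathrm{area}(p_{i-1}, p_i)$. Let $\operatorname{sign} \colon \mathbb{K} \to \{-1,0,1\}$ be the sign function. The discrete angle measure is $$\mathrm{dang}(u,v) := \tfrac14 \,\bigl|\operatorname{sign} u_1 - \operatorname{sign} v_1\bigr| \cdot \operatorname{sign}(u_1 v_2 - u_2 v_1),$$ and for a polygon $P = (p_0,\ldots,p_n)$ we set $\mathrm{Dang}(P) := \sum_{i=1}^n \mathrm{dang}(p_{i-1}, p_i)$. For $q \in \mathbb{K}^2$, $P - q := (p_0 - q, \ldots, p_n - q)$. (Only finitely many $q \in \mathbb{Z}^2$ give $\mathrm{Dang}(P-q) \ne 0$, namely those in a sufficiently large box containing all vertices, so the sum defining $\mathrm{Welp}(P)$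 is finite.) *)

theory Defs
  imports Main
begin

text \<open>A polygon P = (p_0,...,p_n) is given by n and a function p :: nat \<Rightarrow> _ (only p 0 .. p n matter).\<close>

definition area :: "'a::linordered_field \<times> 'a \<Rightarrow> 'a \<times> 'a \<Rightarrow> 'a" where
  "area u v = (1/2) * (fst u - fst v) * (snd u + snd v)"

definition Area :: "nat \<Rightarrow> (nat \<Rightarrow> 'a::linordered_field \<times> 'a) \<Rightarrow> 'a" where
  "Area n p = (\<Sum>i=1..n. area (p (i - 1)) (p i))"

definition dang :: "'a::linordered_field \<times> 'a \<Rightarrow> 'a \<times> 'a \<Rightarrow> 'a" where
  "dang u v = (1/4) * \<bar>sgn (fst u) - sgn (fst v)\<bar> * sgn (fst u * snd v - snd u * fst v)"

definition Dang :: "nat \<Rightarrow> (nat \<Rightarrow> 'a::linordered_field \<times> 'a) \<Rightarrow> 'a" where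
  "Dang n p = (\<Sum>i=1..n. dang (p (i - 1)) (p i))"

definition emb :: "int \<times> int \<Rightarrow> 'a::linordered_field \<times> 'a" where
  "emb z = (of_int (fst z), of_int (snd z))"

definition shift :: "(nat \<Rightarrow> 'a::linordered_field \<times> 'a) \<Rightarrow> 'a \<times> 'a \<Rightarrow> (nat \<Rightarrow> 'a \<times> 'a)" where
  "shift p q = (\<lambda>i. (fst (p i) - fst q, snd (p i) - snd q))"

text \<open>Welp(P) = sum over q in Z^2 of Dang(P - q); the sum has finite support, so it is the
  finite sum over the support.\<close>
definition Welp :: "nat \<Rightarrow> (nat \<Rightarrow> 'a::linordered_field \<times> 'a) \<Rightarrow> 'a" where
  "Welp n p = (\<Sum>q\<in>{q::int \<times> int. Dang n (shift p (emb q)) \<noteq> 0}. Dang n (shift p (emb q)))"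

end

theory Submission
  imports Defs "HOL-Library.Product_Plus"
begin

text \<open>
  Multiplying by 4 turns everything into integers. Let \<open>[X0,X1] \<times> [Y0,Y1]\<close> be the bounding
  box of the vertices. For \<open>q\<close> to the left or right of the box every term of \<open>Dang (P - q)\<close>
  vanishes, and for \<open>q\<close> above or below it the terms telescope around the closed polygon, so
  \<open>Welp P\<close> is a sum over the box. Exchanging the two sums, an edge \<open>u v\<close> contributes
  \<open>2 (v\<^sub>1 - u\<^sub>1) (Y0 + Y1 - u\<^sub>2 - v\<^sub>2)\<close>: in the column at abscissa \<open>x\<close> between \<open>u\<^sub>1\<close> and \<open>v\<^sub>1\<close>
  the sign of the cross product only records whether the lattice point lies above or below the
  edge, which crosses the column at some height \<open>t\<close>, so the column sum is
  \<open>Y0 + Y1 - \<lfloor>t\<rfloor> - \<lceil>t\<rceil>\<close>; the reflected column \<open>u\<^sub>1 + v\<^sub>1 - x\<close> has height \<open>u\<^sub>2 + v\<^sub>2 - t\<close>, so the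
  two columns together contribute \<open>2 (Y0 + Y1 - u\<^sub>2 - v\<^sub>2)\<close>. The part involving \<open>Y0 + Y1\<close>
  telescopes around the polygon, and what remains is the shoelace formula for \<open>4 Area P\<close>.
\<close>

lemma zdiv_less_iff_less_mult:
  fixes m d y :: int
  assumes "0 < d"
  shows "m div d < y \<longleftrightarrow> m < d * y"
proof -
  have "(m - d * y) div d = m div d - y"
    using div_mult_self1[of d m "- y"] assms by (simp add: algebra_simps)
  then show ?thesis
    using pos_imp_zdiv_neg_iff[OF assms, of "m - d * y"] by simp
qed

lemma sum_sgn_affine:
  fixes a b d m :: int
  assumes d: "0 < d" and lo: "d * a \<le> m" and hi: "m \<le> d * b"
  shows "(\<Sum>y\<in>{a..b}. sgn (d * y - m)) = a + b - m div d + (- m) div d"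
proof -
  \<comment> \<open>\<open>f\<close> and \<open>c\<close> are the floor and the ceiling of \<open>m / d\<close>.\<close>
  define f where "f = m div d"
  define c where "c = - ((- m) div d)"
  have f: "f < y \<longleftrightarrow> m < d * y" for y
    unfolding f_def using zdiv_less_iff_less_mult[OF d] .
  have c: "y < c \<longleftrightarrow> d * y < m" for y
    unfolding c_def using zdiv_less_iff_less_mult[OF d, of "- m" "- y"] by linarith
  have "a \<le> f" "f \<le> b" "a \<le> c" "c \<le> b"
    using f[of a] f[of "b + 1"] c[of "a - 1"] c[of b] lo hi d
    by (simp_all add: distrib_left right_diff_distrib)
  have above: "{a..b} \<inter> {y. m < d * y} = {f + 1..b}"
    using f \<open>a \<le> f\<close> by (auto simp flip: f)
  have below: "{a..b} \<inter> {y. d * y < m} = {a..c - 1}"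
    using c \<open>c \<le> b\<close> by (auto simp flip: c)
  have "(\<Sum>y\<in>{a..b}. sgn (d * y - m))
      = (\<Sum>y\<in>{a..b}. of_bool (m < d * y)) - (\<Sum>y\<in>{a..b}. of_bool (d * y < m))"
    unfolding sum_subtractf[symmetric] by (rule sum.cong) (auto simp: sgn_if)
  also have "\<dots> = int (card {f + 1..b}) - int (card {a..c - 1})"
    by (simp add: above below)
  also have "\<dots> = a + b - m div d + (- m) div d"
    using \<open>f \<le> b\<close> \<open>a \<le> c\<close> by (simp add: f_def c_def)
  finally show ?thesis .
qed

lemma sum_sgn_affine_reflect:
  fixes a b d m s :: int
  assumes "0 < d" "d * a \<le> m" "m \<le> d * b" "d * a \<le> d * s - m" "d * s - m \<le> d * b"
  shows "(\<Sum>y\<in>{a..b}. sgn (d * y - m)) + (\<Sum>y\<in>{a..b}. sgn (d * y - (d * s - m)))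
       = 2 * (a + b - s)"
proof -
  have "(d * s - m) div d = s + (- m) div d"
    using div_mult_self1[of d "- m" s] assms(1) by (simp add: mult.commute)
  moreover have "(- (d * s - m)) div d = m div d - s"
    using div_mult_self1[of d m "- s"] assms(1) by (simp add: mult.commute)
  ultimately have "(\<Sum>y\<in>{a..b}. sgn (d * y - (d * s - m))) = a + b - 2 * s - (- m) div d + m div d"
    using sum_sgn_affine[OF assms(1,4,5)] by simp
  then show ?thesis
    using sum_sgn_affine[OF assms(1-3)] by simp
qed

lemma sum_atLeastAtMost_int_reflect:
  fixes g :: "int \<Rightarrow> 'a::comm_monoid_add"
  shows "(\<Sum>x\<in>{a..b}. g x) = (\<Sum>x\<in>{a..b}. g (a + b - x))"
  by (rule sum.reindex_bij_witness[where i="\<lambda>x. a + b - x" and j="\<lambda>x. a + b - x"]) auto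

lemma sum_weighted_reflect_pairs:
  fixes w f :: "int \<Rightarrow> 'a::comm_ring_1"
  assumes w: "\<And>x. x \<in> {a..b} \<Longrightarrow> w (a + b - x) = w x"
      and f: "\<And>x. x \<in> {a..b} \<Longrightarrow> f x + f (a + b - x) = c"
  shows "2 * (\<Sum>x\<in>{a..b}. w x * f x) = c * (\<Sum>x\<in>{a..b}. w x)"
proof -
  have "(\<Sum>x\<in>{a..b}. w x * f x) = (\<Sum>x\<in>{a..b}. w (a + b - x) * f (a + b - x))"
    by (rule sum_atLeastAtMost_int_reflect)
  also have "\<dots> = (\<Sum>x\<in>{a..b}. w x * f (a + b - x))"
    by (rule sum.cong) (simp_all add: w)
  finally have "2 * (\<Sum>x\<in>{a..b}. w x * f x)
      = (\<Sum>x\<in>{a..b}. w x * f x) + (\<Sum>x\<in>{a..b}. w x * f (a + b - x))"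
    by (metis mult_2)
  also have "\<dots> = (\<Sum>x\<in>{a..b}. w x * c)"
    unfolding sum.distrib[symmetric] distrib_left[symmetric] by (rule sum.cong) (simp_all add: f)
  also have "\<dots> = c * (\<Sum>x\<in>{a..b}. w x)"
    unfolding sum_distrib_right[symmetric] by (rule mult.commute)
  finally show ?thesis .
qed

lemma sum_abs_sgn_diff:
  fixes u v :: int
  assumes "u < v"
  shows "(\<Sum>x\<in>{u..v}. \<bar>sgn (u - x) - sgn (v - x)\<bar>) = 2 * (v - u)"
proof -
  have "(\<Sum>x\<in>{u<..<v}. \<bar>sgn (u - x) - sgn (v - x)\<bar>) = (\<Sum>x\<in>{u<..<v}. 2)"
    by (rule sum.cong) auto
  moreover have "{u..v} = insert u (insert v {u<..<v})"
    using assms by auto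
  ultimately show ?thesis
    using assms by simp
qed

definition dang4 :: "int \<times> int \<Rightarrow> int \<times> int \<Rightarrow> int" where
  "dang4 u v = \<bar>sgn (fst u) - sgn (fst v)\<bar> * sgn (fst u * snd v - snd u * fst v)"

lemma dang4_antisym: "dang4 v u = - dang4 u v"
proof -
  have "sgn (fst v * snd u - snd v * fst u) = - sgn (fst u * snd v - snd u * fst v)"
    by (simp add: sgn_minus[symmetric] algebra_simps)
  then show ?thesis
    by (simp add: dang4_def abs_minus_commute)
qed

lemma sum_sgn_column_reflect:
  fixes u1 u2 v1 v2 x :: int
  assumes "u1 \<le> x" "x \<le> v1" "u1 < v1" "u2 \<in> {Y0..Y1}" "v2 \<in> {Y0..Y1}"
  shows "(\<Sum>y\<in>{Y0..Y1}. sgn ((v1 - u1) * y - (u2 * (v1 - x) + v2 * (x - u1))))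
       + (\<Sum>y\<in>{Y0..Y1}. sgn ((v1 - u1) * y - (u2 * (x - u1) + v2 * (v1 - x))))
       = 2 * (Y0 + Y1 - (u2 + v2))"
proof -
  define d where "d = v1 - u1"
  define m where "m = u2 * (v1 - x) + v2 * (x - u1)"
  have "m - d * Y0 = (u2 - Y0) * (v1 - x) + (v2 - Y0) * (x - u1)"
       "d * Y1 - m = (Y1 - u2) * (v1 - x) + (Y1 - v2) * (x - u1)"
       "d * (u2 + v2) - m - d * Y0 = (u2 - Y0) * (x - u1) + (v2 - Y0) * (v1 - x)"
       "d * Y1 - (d * (u2 + v2) - m) = (Y1 - u2) * (x - u1) + (Y1 - v2) * (v1 - x)"
    by (simp_all add: m_def d_def algebra_simps)
  moreover have "0 \<le> (u2 - Y0) * (v1 - x) + (v2 - Y0) * (x - u1)"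
                "0 \<le> (Y1 - u2) * (v1 - x) + (Y1 - v2) * (x - u1)"
                "0 \<le> (u2 - Y0) * (x - u1) + (v2 - Y0) * (v1 - x)"
                "0 \<le> (Y1 - u2) * (x - u1) + (Y1 - v2) * (v1 - x)"
    using assms by simp_all
  ultimately have "d * Y0 \<le> m" "m \<le> d * Y1" "d * Y0 \<le> d * (u2 + v2) - m" "d * (u2 + v2) - m \<le> d * Y1"
    by linarith+
  moreover have "0 < d"
    using assms by (simp add: d_def)
  ultimately have "(\<Sum>y\<in>{Y0..Y1}. sgn (d * y - m)) + (\<Sum>y\<in>{Y0..Y1}. sgn (d * y - (d * (u2 + v2) - m)))
      = 2 * (Y0 + Y1 - (u2 + v2))"
    by (intro sum_sgn_affine_reflect)
  moreover have "d * (u2 + v2) - m = u2 * (x - u1) + v2 * (v1 - x)"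
    by (simp add: m_def d_def algebra_simps)
  ultimately show ?thesis
    by (simp add: m_def d_def)
qed

lemma sum_box_dang4_less:
  fixes u v :: "int \<times> int"
  assumes less: "fst u < fst v"
    and box: "u \<in> {X0..X1} \<times> {Y0..Y1}" "v \<in> {X0..X1} \<times> {Y0..Y1}"
  shows "(\<Sum>q\<in>{X0..X1} \<times> {Y0..Y1}. dang4 (u - q) (v - q))
       = 2 * (fst v - fst u) * (Y0 + Y1 - (snd u + snd v))"
proof -
  obtain u1 u2 v1 v2 where uv: "u = (u1, u2)" "v = (v1, v2)"
    by fastforce
  \<comment> \<open>The edge crosses the column at abscissa \<open>x\<close> at height \<open>M x / (v1 - u1)\<close>.\<close>
  define M where "M x = u2 * (v1 - x) + v2 * (x - u1)" for x :: int
  define W where "W x = \<bar>sgn (u1 - x) - sgn (v1 - x)\<bar>" for x :: int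
  define C where "C x = (\<Sum>y\<in>{Y0..Y1}. sgn ((v1 - u1) * y - M x))" for x
  have "dang4 (u - (x, y)) (v - (x, y)) = W x * sgn ((v1 - u1) * y - M x)" for x y
    by (simp add: uv dang4_def W_def M_def algebra_simps)
  then have "(\<Sum>q\<in>{X0..X1} \<times> {Y0..Y1}. dang4 (u - q) (v - q)) = (\<Sum>x\<in>{X0..X1}. W x * C x)"
    by (simp add: sum.cartesian_product' sum_distrib_left C_def)
  also have "\<dots> = (\<Sum>x\<in>{u1..v1}. W x * C x)"
  proof (rule sum.mono_neutral_right)
    show "\<forall>x\<in>{X0..X1} - {u1..v1}. W x * C x = 0"
      using less by (auto simp: uv W_def)
  qed (use box in \<open>auto simp: uv\<close>)
  finally have sum_columns:
    "(\<Sum>q\<in>{X0..X1} \<times> {Y0..Y1}. dang4 (u - q) (v - q)) = (\<Sum>x\<in>{u1..v1}. W x * C x)" .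
  have "C x + C (u1 + v1 - x) = 2 * (Y0 + Y1 - (u2 + v2))" if "x \<in> {u1..v1}" for x
    using sum_sgn_column_reflect[of u1 x v1 u2 Y0 Y1 v2] that less box
    by (simp add: uv C_def M_def)
  moreover have "W (u1 + v1 - x) = W x" for x
    by (simp add: W_def sgn_if)
  ultimately have "2 * (\<Sum>x\<in>{u1..v1}. W x * C x) = 2 * (2 * (v1 - u1) * (Y0 + Y1 - (u2 + v2)))"
    using sum_weighted_reflect_pairs[of u1 v1 W C] sum_abs_sgn_diff[of u1 v1] less
    by (simp add: uv W_def mult.commute)
  then have "(\<Sum>x\<in>{u1..v1}. W x * C x) = 2 * (v1 - u1) * (Y0 + Y1 - (u2 + v2))"
    by (subst (asm) mult_cancel_left) simp
  then show ?thesis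
    using sum_columns by (simp add: uv)
qed

lemma sum_box_dang4:
  fixes u v :: "int \<times> int"
  assumes "u \<in> {X0..X1} \<times> {Y0..Y1}" "v \<in> {X0..X1} \<times> {Y0..Y1}"
  shows "(\<Sum>q\<in>{X0..X1} \<times> {Y0..Y1}. dang4 (u - q) (v - q))
       = 2 * (fst v - fst u) * (Y0 + Y1 - (snd u + snd v))"
proof (cases "fst u" "fst v" rule: linorder_cases)
  case less
  then show ?thesis
    using sum_box_dang4_less assms by blast
next
  case equal
  then show ?thesis
    by (simp add: dang4_def)
next
  case greater
  then have "(\<Sum>q\<in>{X0..X1} \<times> {Y0..Y1}. dang4 (v - q) (u - q))
           = 2 * (fst u - fst v) * (Y0 + Y1 - (snd v + snd u))"
    using sum_box_dang4_less assms by blast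
  then show ?thesis
    by (simp add: dang4_antisym[of "u - _"] sum_negf algebra_simps)
qed

lemma sum_box_closed_polygon_dang4:
  fixes p :: "nat \<Rightarrow> int \<times> int"
  assumes closed: "p n = p 0" and box: "\<And>i. i \<le> n \<Longrightarrow> p i \<in> {X0..X1} \<times> {Y0..Y1}"
  shows "(\<Sum>q\<in>{X0..X1} \<times> {Y0..Y1}. \<Sum>i=1..n. dang4 (p (i - 1) - q) (p i - q))
       = 2 * (\<Sum>i=1..n. (fst (p (i - 1)) - fst (p i)) * (snd (p (i - 1)) + snd (p i)))"
proof -
  have "(\<Sum>q\<in>{X0..X1} \<times> {Y0..Y1}. \<Sum>i=1..n. dang4 (p (i - 1) - q) (p i - q))
      = (\<Sum>i=1..n. 2 * (fst (p i) - fst (p (i - 1))) * (Y0 + Y1 - (snd (p (i - 1)) + snd (p i))))"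
  proof (subst sum.swap, rule sum.cong)
    fix i
    assume "i \<in> {1..n}"
    then have "i - 1 \<le> n" "i \<le> n"
      by auto
    then show "(\<Sum>q\<in>{X0..X1} \<times> {Y0..Y1}. dang4 (p (i - 1) - q) (p i - q))
             = 2 * (fst (p i) - fst (p (i - 1))) * (Y0 + Y1 - (snd (p (i - 1)) + snd (p i)))"
      using sum_box_dang4 box by blast
  qed simp
  also have "\<dots> = 2 * (Y0 + Y1) * (\<Sum>i=1..n. fst (p i) - fst (p (i - 1)))
      + 2 * (\<Sum>i=1..n. (fst (p (i - 1)) - fst (p i)) * (snd (p (i - 1)) + snd (p i)))"
    by (simp add: sum_distrib_left sum.distrib[symmetric] algebra_simps)
  also have "(\<Sum>i=1..n. fst (p i) - fst (p (i - 1))) = 0"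
    using sum_telescope''[of 0 n "\<lambda>i. fst (p i)"] closed by simp
  finally show ?thesis
    by simp
qed

lemma dang_eq_0_if_sgn_fst_eq:
  "sgn (fst u) = sgn (fst v) \<Longrightarrow> dang u v = 0"
  by (simp add: dang_def)

lemma dang_if_sgn_snd_eq:
  fixes u v :: "'a::linordered_field \<times> 'a"
  assumes "sgn (snd u) = s" "sgn (snd v) = s" "s \<noteq> 0"
  shows "dang u v = s * (sgn (fst u) - sgn (fst v)) / 4"
proof -
  obtain a b c e where uv: "u = (a, b)" "v = (c, e)"
    by fastforce
  consider "s = 1" "0 < b" "0 < e" | "s = -1" "b < 0" "e < 0"
    using assms by (auto simp: uv sgn_if split: if_splits)
  then show ?thesis
  proof cases
    case 1
    then have signs: "a < 0 \<Longrightarrow> a * e < 0" "0 < a \<Longrightarrow> 0 < a * e"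
                     "c < 0 \<Longrightarrow> b * c < 0" "0 < c \<Longrightarrow> 0 < b * c"
      by (simp_all add: mult_neg_pos mult_pos_neg)
    show ?thesis
      by (cases a "0::'a" rule: linorder_cases; cases c "0::'a" rule: linorder_cases)
         (use signs \<open>s = 1\<close> in \<open>auto simp: uv dang_def sgn_if\<close>)
  next
    case 2
    then have signs: "a < 0 \<Longrightarrow> 0 < a * e" "0 < a \<Longrightarrow> a * e < 0"
                     "c < 0 \<Longrightarrow> 0 < b * c" "0 < c \<Longrightarrow> b * c < 0"
      by (simp_all add: mult_neg_neg mult_pos_neg mult_neg_pos)
    show ?thesis
      by (cases a "0::'a" rule: linorder_cases; cases c "0::'a" rule: linorder_cases)
         (use signs \<open>s = -1\<close> in \<open>auto simp: uv dang_def sgn_if\<close>)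
  qed
qed

lemma Dang_eq_0_if_sgn_fst_const:
  assumes "\<And>i. i \<le> n \<Longrightarrow> sgn (fst (p i)) = s"
  shows "Dang n p = 0"
  unfolding Dang_def
proof (rule sum.neutral, rule ballI)
  fix i
  assume "i \<in> {1..n}"
  then have "i - 1 \<le> n" "i \<le> n"
    by auto
  then have "sgn (fst (p (i - 1))) = sgn (fst (p i))"
    using assms by metis
  then show "dang (p (i - 1)) (p i) = 0"
    by (rule dang_eq_0_if_sgn_fst_eq)
qed

lemma Dang_closed_eq_0_if_sgn_snd_const:
  fixes p :: "nat \<Rightarrow> 'a::linordered_field \<times> 'a"
  assumes closed: "p n = p 0" and sgn_snd: "\<And>i. i \<le> n \<Longrightarrow> sgn (snd (p i)) = s" and "s \<noteq> 0"
  shows "Dang n p = 0"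
proof -
  have "Dang n p = - s / 4 * (\<Sum>i=1..n. sgn (fst (p i)) - sgn (fst (p (i - 1))))"
    unfolding Dang_def sum_distrib_left
  proof (rule sum.cong)
    fix i
    assume "i \<in> {1..n}"
    then have "i - 1 \<le> n" "i \<le> n"
      by auto
    then show "dang (p (i - 1)) (p i) = - s / 4 * (sgn (fst (p i)) - sgn (fst (p (i - 1))))"
      using dang_if_sgn_snd_eq[OF sgn_snd sgn_snd \<open>s \<noteq> 0\<close>] by (simp add: algebra_simps)
  qed simp
  also have "\<dots> = 0"
    using sum_telescope''[of 0 n "\<lambda>i. sgn (fst (p i))"] closed by simp
  finally show ?thesis .
qed

lemma Dang_shift_eq_0_outside_box:
  fixes p :: "nat \<Rightarrow> 'a::linordered_field \<times> 'a"
  assumes closed: "p n = p 0"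
    and box: "\<And>i. i \<le> n \<Longrightarrow> p i \<in> {X0..X1} \<times> {Y0..Y1}"
    and outside: "q \<notin> {X0..X1} \<times> {Y0..Y1}"
  shows "Dang n (shift p q) = 0"
proof -
  have closed_shift: "shift p q n = shift p q 0"
    using closed by (simp add: shift_def)
  consider "fst q < X0" | "X1 < fst q" | "snd q < Y0" | "Y1 < snd q"
    using outside by (cases q) force
  then show ?thesis
  proof cases
    case 1
    then show ?thesis
      using box by (intro Dang_eq_0_if_sgn_fst_const[where s=1]) (force simp: shift_def)
  next
    case 2
    then show ?thesis
      using box by (intro Dang_eq_0_if_sgn_fst_const[where s="-1"]) (force simp: shift_def)
  next
    case 3
    then show ?thesis
      using box by (intro Dang_closed_eq_0_if_sgn_snd_const[OF closed_shift, where s=1])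
        (force simp: shift_def)+
  next
    case 4
    then show ?thesis
      using box by (intro Dang_closed_eq_0_if_sgn_snd_const[OF closed_shift, where s="-1"])
        (force simp: shift_def)+
  qed
qed

lemma sgn_of_int: "sgn (of_int k :: 'a::linordered_idom) = of_int (sgn k)"
  by (simp add: sgn_if)

lemma dang_emb: "dang (emb u) (emb v) = (of_int (dang4 u v) :: 'a::linordered_field) / 4"
proof -
  have "sgn (of_int (fst u) * of_int (snd v) - of_int (snd u) * of_int (fst v) :: 'a)
      = of_int (sgn (fst u * snd v - snd u * fst v))"
    by (simp flip: sgn_of_int)
  then show ?thesis
    by (simp add: dang_def dang4_def emb_def sgn_of_int)
qed

lemma Dang_emb:
  "Dang n (\<lambda>i. emb (p i)) = (of_int (\<Sum>i=1..n. dang4 (p (i - 1)) (p i)) :: 'a::linordered_field) / 4"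
  by (simp add: Dang_def dang_emb of_int_sum sum_divide_distrib)

lemma Area_emb:
  "Area n (\<lambda>i. emb (p i))
   = (of_int (\<Sum>i=1..n. (fst (p (i - 1)) - fst (p i)) * (snd (p (i - 1)) + snd (p i)))
      :: 'a::linordered_field) / 2"
  by (simp add: Area_def area_def emb_def of_int_sum sum_divide_distrib)

lemma shift_emb: "shift (\<lambda>i. emb (p i)) (emb q) = (\<lambda>i. emb (p i - q))"
  by (simp add: shift_def emb_def)

lemma emb_mem_box_iff:
  "(emb q :: 'a::linordered_field \<times> 'a) \<in> {of_int X0..of_int X1} \<times> {of_int Y0..of_int Y1}
   \<longleftrightarrow> q \<in> {X0..X1} \<times> {Y0..Y1}"
  by (cases q) (simp add: emb_def)

lemma support_Dang_shift_emb_subset_box: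
  fixes p :: "nat \<Rightarrow> int \<times> int"
  assumes closed: "p n = p 0" and box: "\<And>i. i \<le> n \<Longrightarrow> p i \<in> {X0..X1} \<times> {Y0..Y1}"
  shows "{q. Dang n (shift (\<lambda>i. emb (p i)) (emb q)) \<noteq> (0::'a::linordered_field)}
         \<subseteq> {X0..X1} \<times> {Y0..Y1}"
proof (rule subsetI, rule ccontr)
  fix q
  assume "q \<in> {q. Dang n (shift (\<lambda>i. emb (p i)) (emb q)) \<noteq> (0::'a)}"
     and "q \<notin> {X0..X1} \<times> {Y0..Y1}"
  moreover have "Dang n (shift (\<lambda>i. emb (p i)) (emb q)) = (0::'a)"
  proof (rule Dang_shift_eq_0_outside_box)
    show "emb (p n) = (emb (p 0) :: 'a \<times> 'a)"
      using closed by simp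
    show "emb (p i) \<in> {of_int X0..of_int X1} \<times> {of_int Y0..of_int Y1}" if "i \<le> n" for i
      using box[OF that] by (simp only: emb_mem_box_iff)
    show "emb q \<notin> {of_int X0..of_int X1} \<times> {of_int Y0..of_int Y1}"
      using \<open>q \<notin> {X0..X1} \<times> {Y0..Y1}\<close> by (simp add: emb_mem_box_iff)
  qed
  ultimately show False
    by simp
qed

lemma finite_subset_box:
  fixes A :: "(int \<times> int) set"
  assumes "finite A"
  obtains X0 X1 Y0 Y1 where "A \<subseteq> {X0..X1} \<times> {Y0..Y1}"
proof -
  have "finite (fst ` A)" "finite (snd ` A)"
    using assms by simp_all
  then obtain X0 X1 Y0 Y1
    where "\<forall>x\<in>fst ` A. X0 \<le> x \<and> x \<le> X1" "\<forall>y\<in>snd ` A. Y0 \<le> y \<and> y \<le> Y1"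
    by (meson bdd_above_def bdd_below_def bdd_above_finite bdd_below_finite)
  then show ?thesis
    by (intro that) force
qed

theorem lemma2p7:
  fixes n :: nat and p :: "nat \<Rightarrow> int \<times> int"
  assumes "n \<ge> 1" and "p n = p 0"
  shows "finite {q::int \<times> int. Dang n (shift (\<lambda>i. emb (p i)) (emb q)) \<noteq> (0::'a::linordered_field)}
         \<and> Area n (\<lambda>i. emb (p i) :: 'a \<times> 'a) = Welp n (\<lambda>i. emb (p i))"
proof -
  let ?P = "\<lambda>i. emb (p i) :: 'a \<times> 'a"
  obtain X0 X1 Y0 Y1 where "p ` {..n} \<subseteq> {X0..X1} \<times> {Y0..Y1}"
    using finite_subset_box by blast
  then have box: "\<And>i. i \<le> n \<Longrightarrow> p i \<in> {X0..X1} \<times> {Y0..Y1}"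
    by auto
  define B where "B = {X0..X1} \<times> {Y0..Y1}"
  have support: "{q. Dang n (shift ?P (emb q)) \<noteq> 0} \<subseteq> B"
    unfolding B_def using support_Dang_shift_emb_subset_box[OF \<open>p n = p 0\<close> box] .
  have "Welp n ?P = (\<Sum>q\<in>B. Dang n (shift ?P (emb q)))"
    unfolding Welp_def using support by (intro sum.mono_neutral_left) (auto simp: B_def)
  also have "\<dots> = of_int (\<Sum>q\<in>B. \<Sum>i=1..n. dang4 (p (i - 1) - q) (p i - q)) / 4"
    by (simp add: shift_emb Dang_emb of_int_sum sum_divide_distrib)
  also have "\<dots> = Area n ?P"
    using sum_box_closed_polygon_dang4[OF \<open>p n = p 0\<close> box] by (simp add: B_def Area_emb)
  finally show ?thesis
    using support by (auto simp: B_def intro: finite_subset)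
qed

end
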